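(* Let $\beta>0$, $\gamma>0$, $T$ a positive integer, and $(\eta_t)_{t\ge1}$ positive step sizes. Then: (i) If $\eta_t=C\le2/(\beta+\gamma)$ for all $t$, then $\sum_{t=1}^T\eta_t\prod_{j=t+1}^T(1-\eta_j\gamma)=\frac{1-(1-C\gamma)^T}{\gamma}$. (ii) If $\eta_t=C/t\le2/(\beta+\gamma)$ for $t\ge1+\lceil\beta/\gamma\rceil$ for some $C\ge2/\gamma$, and $\eta_t=C'/t\le2/(\beta+\gamma)$ for $t\le\lceil\beta/\gamma\rceil$ for some $C'<2/(\gamma+\beta)$, then $\sum_{t=1}^T\eta_t\prod_{j=t+1}^T\left(1-\frac{\eta_j\gamma}{2}\right)\le C\log\left(e^2\lceil\beta/\gamma\rceil\right)$. (iii) If $\eta_t\le C/t<2/\beta$ for all $t$, then $\sum_{t=1}^T\eta_t\prod_{j=t+1}^T(1+\beta\eta_j)^2\le C e^{2C\beta}T^{2C\beta}\min\left\{1+\frac1{2C\beta},\ \log(eT)\right\}$. *)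

theory Defs
  imports Complex_Main
begin

end

theory Submission
  imports Defs
begin

(* Part (i) is a geometric sum. In (ii), beyond k = \<lceil>\<beta>/\<gamma>\<rceil> every factor satisfies
   1 - \<eta>_j \<gamma>/2 \<le> 1 - 1/j, so the product telescopes to at most t/T and each late term is at
   most C/T; the early terms are bounded by C times the harmonic sum H_k \<le> 1 + ln k.
   In (iii), 1 + x \<le> e^x turns the product into exp (2 C \<beta> \<Sum> 1/j) \<le> (T/t)^(2C\<beta>), leaving
   \<Sum> t^(-1-a) with a = 2C\<beta>, which is at most the harmonic sum and, by comparison with
   the integral of x^(-1-a), at most 1 + 1/a. *)

lemma sum_le_telescope:
  fixes f g :: "nat \<Rightarrow> 'a::ordered_ab_group_add"
  assumes "m \<le> n" and "\<And>k. m < k \<Longrightarrow> k \<le> n \<Longrightarrow> f k \<le> g k - g (k - 1)"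
  shows "(\<Sum>k=Suc m..n. f k) \<le> g n - g m"
proof -
  have "(\<Sum>k=Suc m..n. f k) \<le> (\<Sum>k=Suc m..n. g k - g (k - 1))"
    using assms(2) by (intro sum_mono) auto
  also have "\<dots> = g n - g m"
    using assms(1) by (rule sum_telescope'')
  finally show ?thesis .
qed

lemma inverse_le_ln_diff:
  fixes x :: real
  assumes "1 < x"
  shows "1 / x \<le> ln x - ln (x - 1)"
proof -
  have "ln ((x - 1) / x) \<le> (x - 1) / x - 1"
    using assms by (intro ln_le_minus_one) simp
  also have "ln ((x - 1) / x) = ln (x - 1) - ln x"
    using assms by (simp add: ln_div)
  finally show ?thesis
    using assms by (simp add: field_simps)
qed

lemma powr_neg_le_powr_diff:
  fixes x a :: real
  assumes "1 < x" and "0 < a"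
  shows "x powr (-1 - a) \<le> ((x - 1) powr (-a) - x powr (-a)) / a"
proof -
  have "(1 + a / x) * x powr (-a) \<le> exp (a * (ln x - ln (x - 1))) * x powr (-a)"
  proof (intro mult_right_mono)
    have "1 + a / x \<le> exp (a / x)" by (rule exp_ge_add_one_self)
    also have "\<dots> \<le> exp (a * (ln x - ln (x - 1)))"
      using mult_left_mono[OF inverse_le_ln_diff[OF assms(1)], of a] assms(2) by simp
    finally show "1 + a / x \<le> exp (a * (ln x - ln (x - 1)))" .
  qed simp
  also have "\<dots> = (x - 1) powr (-a)"
    using assms by (simp add: powr_def algebra_simps flip: exp_add)
  finally have "x powr (-a) + a * (x powr (-a) / x) \<le> (x - 1) powr (-a)"
    by (simp add: algebra_simps)
  moreover have "x powr (-a) / x = x powr (-1 - a)"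
    using assms by (simp add: powr_diff powr_minus divide_simps)
  ultimately show ?thesis
    using assms by (simp add: field_simps)
qed

lemma sum_inverse_le_ln_div:
  assumes "1 \<le> t" and "t \<le> n"
  shows "(\<Sum>j=Suc t..n. 1 / real j) \<le> ln (real n) - ln (real t)"
  using assms(2)
proof (rule sum_le_telescope)
  fix j :: nat assume "t < j"
  with assms(1) show "1 / real j \<le> ln (real j) - ln (real (j - 1))"
    using inverse_le_ln_diff[of "real j"] by (simp add: of_nat_diff)
qed

lemma harmonic_le_one_plus_ln:
  assumes "1 \<le> n"
  shows "(\<Sum>j=1..n. 1 / real j) \<le> 1 + ln (real n)"
proof -
  have "(\<Sum>j=1..n. 1 / real j) = 1 + (\<Sum>j=Suc 1..n. 1 / real j)"
    using assms by (simp add: sum.atLeast_Suc_atMost)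
  then show ?thesis
    using sum_inverse_le_ln_div[of 1 n] assms by simp
qed

lemma sum_powr_neg_le:
  fixes a :: real and T :: nat
  assumes "0 < a"
  shows "(\<Sum>t=1..T. real t powr (-1 - a)) \<le> 1 + 1 / a"
proof (cases "T = 0")
  case False
  define g where "g t = - (real t powr (-a)) / a" for t
  have "(\<Sum>t=Suc 1..T. real t powr (-1 - a)) \<le> g T - g 1"
  proof (rule sum_le_telescope)
    fix t :: nat assume "1 < t"
    then show "real t powr (-1 - a) \<le> g t - g (t - 1)"
      using powr_neg_le_powr_diff[of "real t" a] assms by (simp add: g_def of_nat_diff diff_divide_distrib)
  qed (use False in simp)
  also have "\<dots> \<le> 1 / a"
    using assms by (simp add: g_def divide_simps)
  finally show ?thesis
    using False by (simp add: sum.atLeast_Suc_atMost)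
qed (use assms in simp)

lemma sum_powr_neg_le_ln:
  fixes a :: real
  assumes "0 \<le> a" and "1 \<le> T"
  shows "(\<Sum>t=1..T. real t powr (-1 - a)) \<le> ln (exp 1 * real T)"
proof -
  have "(\<Sum>t=1..T. real t powr (-1 - a)) \<le> (\<Sum>t=1..T. real t powr (-1))"
    using assms(1) by (intro sum_mono powr_mono) auto
  also have "\<dots> = (\<Sum>t=1..T. 1 / real t)"
    by (intro sum.cong) (auto simp: powr_minus_divide)
  also have "\<dots> \<le> ln (exp 1 * real T)"
    using harmonic_le_one_plus_ln[OF assms(2)] assms(2) by (simp add: ln_mult)
  finally show ?thesis .
qed

lemma prod_le_div_of_le_one_minus_inverse:
  fixes f :: "nat \<Rightarrow> real"
  assumes "1 \<le> t" and "t \<le> n" and "\<And>j. t < j \<Longrightarrow> j \<le> n \<Longrightarrow> 0 \<le> f j \<and> f j \<le> 1 - 1 / real j"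
  shows "(\<Prod>j=t+1..n. f j) \<le> real t / real n"
  using assms(2,3)
proof (induction n rule: dec_induct)
  case base
  then show ?case using assms(1) by simp
next
  case (step n)
  have "(\<Prod>j=t+1..Suc n. f j) = (\<Prod>j=t+1..n. f j) * f (Suc n)"
    using step.hyps by (simp add: prod.cl_ivl_Suc)
  also have "\<dots> \<le> real t / real n * (1 - 1 / real (Suc n))"
    using step.IH step.prems[of "Suc n"] step.prems step.hyps by (intro mult_mono prod_nonneg) auto
  also have "\<dots> = real t / real (Suc n)"
    using step.hyps assms(1) by (simp add: field_simps)
  finally show ?case .
qed

lemma sum_step_prod_const_eq:
  fixes c \<gamma> :: "'a::field" and T :: nat
  assumes "c * \<gamma> \<noteq> 0"
  shows "(\<Sum>t=1..T. c * (\<Prod>j=t+1..T. 1 - c * \<gamma>)) = (1 - (1 - c * \<gamma>) ^ T) / \<gamma>"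
proof -
  have "(\<Sum>t=1..T. c * (\<Prod>j=t+1..T. 1 - c * \<gamma>)) = (\<Sum>t=1..T. c * (1 - c * \<gamma>) ^ (T - t))"
    by (intro sum.cong) (auto simp: prod_constant)
  also have "\<dots> = (\<Sum>k<T. c * (1 - c * \<gamma>) ^ (T - Suc k))"
    by (simp add: sum.atLeast1_atMost_eq)
  also have "\<dots> = c * (\<Sum>k<T. (1 - c * \<gamma>) ^ k)"
    by (subst sum.nat_diff_reindex) (simp add: sum_distrib_left)
  also have "\<dots> = (1 - (1 - c * \<gamma>) ^ T) / \<gamma>"
    using assms by (simp add: sum_gp_strict)
  finally show ?thesis .
qed

lemma prod_one_plus_sq_le_powr:
  fixes \<beta> C :: real and \<eta> :: "nat \<Rightarrow> real"
  assumes "0 \<le> \<beta>" and "0 \<le> C" and "1 \<le> t" and "t \<le> T"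
    and "\<And>j. t < j \<Longrightarrow> j \<le> T \<Longrightarrow> 0 \<le> \<eta> j \<and> \<eta> j \<le> C / real j"
  shows "(\<Prod>j=t+1..T. (1 + \<beta> * \<eta> j)\<^sup>2) \<le> (real T / real t) powr (2 * C * \<beta>)"
proof -
  have "(\<Prod>j=t+1..T. (1 + \<beta> * \<eta> j)\<^sup>2) \<le> (\<Prod>j=t+1..T. exp (2 * C * \<beta> * (1 / real j)))"
  proof (rule prod_mono)
    fix j assume "j \<in> {t+1..T}"
    then have \<eta>: "0 \<le> \<eta> j" "\<eta> j \<le> C / real j"
      using assms(5) by auto
    have "(1 + \<beta> * \<eta> j)\<^sup>2 \<le> exp (\<beta> * \<eta> j) ^ 2"
      using \<eta> assms(1) by (intro power_mono exp_ge_add_one_self) auto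
    also have "\<dots> = exp (2 * \<beta> * \<eta> j)"
      by (simp flip: exp_of_nat_mult)
    also have "\<dots> \<le> exp (2 * C * \<beta> * (1 / real j))"
      using mult_left_mono[OF \<eta>(2), of "2 * \<beta>"] assms(1) by (simp add: mult_ac)
    finally show "0 \<le> (1 + \<beta> * \<eta> j)\<^sup>2 \<and> (1 + \<beta> * \<eta> j)\<^sup>2 \<le> exp (2 * C * \<beta> * (1 / real j))"
      by simp
  qed
  also have "\<dots> = exp (2 * C * \<beta> * (\<Sum>j=t+1..T. 1 / real j))"
    by (simp add: exp_sum sum_distrib_left)
  also have "\<dots> \<le> exp (2 * C * \<beta> * (ln (real T) - ln (real t)))"
    using sum_inverse_le_ln_div[OF assms(3,4)] assms(1,2) by (simp add: mult_left_mono)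
  also have "\<dots> = (real T / real t) powr (2 * C * \<beta>)"
    using assms(3,4) by (simp add: powr_def ln_div mult_ac)
  finally show ?thesis .
qed

lemma sum_step_prod_growth_le:
  fixes \<beta> C :: real and T :: nat and \<eta> :: "nat \<Rightarrow> real"
  assumes "0 < \<beta>" and "1 \<le> T" and "\<And>t. 1 \<le> t \<Longrightarrow> 0 < \<eta> t \<and> \<eta> t \<le> C / real t"
  shows "(\<Sum>t=1..T. \<eta> t * (\<Prod>j=t+1..T. (1 + \<beta> * \<eta> j)\<^sup>2))
           \<le> C * exp (2 * C * \<beta>) * real T powr (2 * C * \<beta>)
              * min (1 + 1 / (2 * C * \<beta>)) (ln (exp 1 * real T))"
proof -
  define a where "a = 2 * C * \<beta>"
  define m where "m = min (1 + 1 / a) (ln (exp 1 * real T))"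
  have "0 < C"
    using assms(3)[of 1] by simp
  then have "0 < a"
    using assms(1) by (simp add: a_def)
  have term_le: "\<eta> t * (\<Prod>j=t+1..T. (1 + \<beta> * \<eta> j)\<^sup>2) \<le> C * real T powr a * real t powr (-1 - a)"
    if "t \<in> {1..T}" for t
  proof -
    have "\<eta> t * (\<Prod>j=t+1..T. (1 + \<beta> * \<eta> j)\<^sup>2) \<le> C / real t * (real T / real t) powr a"
      using that assms \<open>0 < C\<close> prod_one_plus_sq_le_powr[of \<beta> C t T \<eta>]
      by (intro mult_mono prod_nonneg) (auto simp: a_def less_imp_le)
    also have "\<dots> = C * real T powr a * real t powr (-1 - a)"
      using that by (simp add: powr_divide powr_diff powr_minus divide_simps)
    finally show ?thesis .
  qed
  have "(\<Sum>t=1..T. \<eta> t * (\<Prod>j=t+1..T. (1 + \<beta> * \<eta> j)\<^sup>2))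
          \<le> (\<Sum>t=1..T. C * real T powr a * real t powr (-1 - a))"
    using term_le by (rule sum_mono)
  also have "\<dots> = C * real T powr a * (\<Sum>t=1..T. real t powr (-1 - a))"
    by (simp add: sum_distrib_left)
  also have "\<dots> \<le> C * real T powr a * m"
    using sum_powr_neg_le[OF \<open>0 < a\<close>] sum_powr_neg_le_ln[of a T] assms(2) \<open>0 < C\<close> \<open>0 < a\<close>
    by (intro mult_left_mono) (auto simp: m_def)
  also have "\<dots> \<le> C * exp a * real T powr a * m"
  proof -
    have "0 \<le> m"
      using \<open>0 < a\<close> assms(2) by (simp add: m_def ln_mult)
    then show ?thesis
      using \<open>0 < C\<close> \<open>0 < a\<close> by (intro mult_right_mono) auto
  qed
  finally show ?thesis
    by (simp add: a_def m_def)
qed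

lemma sum_step_prod_decay_le:
  fixes \<gamma> C :: real and k T :: nat and \<eta> :: "nat \<Rightarrow> real"
  assumes "0 < \<gamma>" and "2 \<le> C * \<gamma>" and "1 \<le> k"
    and step_le: "\<And>j. 1 \<le> j \<Longrightarrow> 0 \<le> \<eta> j \<and> \<eta> j * \<gamma> \<le> 2"
    and early: "\<And>t. 1 \<le> t \<Longrightarrow> t \<le> k \<Longrightarrow> \<eta> t \<le> C / real t"
    and late: "\<And>t. k < t \<Longrightarrow> \<eta> t = C / real t"
  shows "(\<Sum>t=1..T. \<eta> t * (\<Prod>j=t+1..T. 1 - \<eta> j * \<gamma> / 2)) \<le> C * (2 + ln (real k))"
proof -
  have "0 < C"
    using zero_less_mult_pos2[of C \<gamma>] assms(1,2) by linarith
  have factor: "0 \<le> 1 - \<eta> j * \<gamma> / 2 \<and> 1 - \<eta> j * \<gamma> / 2 \<le> 1" if "1 \<le> j" for j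
    using step_le[OF that] assms(1) by simp
  have term_le: "\<eta> t * (\<Prod>j=t+1..T. 1 - \<eta> j * \<gamma> / 2) \<le> (if t \<le> k then C / real t else 0) + C / real T"
    if "t \<in> {1..T}" for t
  proof (cases "t \<le> k")
    case True
    have "\<eta> t * (\<Prod>j=t+1..T. 1 - \<eta> j * \<gamma> / 2) \<le> \<eta> t"
      using factor step_le that by (intro mult_left_le prod_le_1) auto
    moreover have "0 \<le> C / real T"
      using \<open>0 < C\<close> by simp
    ultimately show ?thesis
      using early[of t] True that by simp
  next
    case False
    have decay: "(\<Prod>j=t+1..T. 1 - \<eta> j * \<gamma> / 2) \<le> real t / real T"
    proof (rule prod_le_div_of_le_one_minus_inverse)
      fix j assume "t < j" "j \<le> T"
      then have "1 / real j \<le> \<eta> j * \<gamma> / 2"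
        using late[of j] False assms(2) by (simp add: field_simps)
      then show "0 \<le> 1 - \<eta> j * \<gamma> / 2 \<and> 1 - \<eta> j * \<gamma> / 2 \<le> 1 - 1 / real j"
        using factor[of j] \<open>t < j\<close> by simp
    qed (use that in auto)
    have "\<eta> t = C / real t"
      using late False by simp
    moreover have "0 \<le> C / real t"
      using \<open>0 < C\<close> by simp
    ultimately have "\<eta> t * (\<Prod>j=t+1..T. 1 - \<eta> j * \<gamma> / 2) \<le> C / real t * (real t / real T)"
      by (metis mult_left_mono[OF decay])
    then show ?thesis
      using False that by simp
  qed
  have "(\<Sum>t=1..T. \<eta> t * (\<Prod>j=t+1..T. 1 - \<eta> j * \<gamma> / 2))
          \<le> (\<Sum>t=1..T. (if t \<le> k then C / real t else 0) + C / real T)"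
    using term_le by (rule sum_mono)
  also have "\<dots> = (\<Sum>t\<in>{t\<in>{1..T}. t \<le> k}. C / real t) + real T * (C / real T)"
    unfolding sum.distrib sum.inter_filter[OF finite_atLeastAtMost] by simp
  also have "\<dots> \<le> (\<Sum>t=1..k. C / real t) + C"
  proof (rule add_mono)
    show "(\<Sum>t\<in>{t\<in>{1..T}. t \<le> k}. C / real t) \<le> (\<Sum>t=1..k. C / real t)"
      using \<open>0 < C\<close> by (intro sum_mono2) auto
    show "real T * (C / real T) \<le> C"
      by (cases "T = 0") (use \<open>0 < C\<close> in auto)
  qed
  also have "\<dots> = C * (\<Sum>t=1..k. 1 / real t) + C"
    by (simp add: sum_distrib_left)
  also have "\<dots> \<le> C * (1 + ln (real k)) + C"
    using harmonic_le_one_plus_ln[OF assms(3)] \<open>0 < C\<close> by simp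
  finally show ?thesis
    by (simp add: algebra_simps)
qed

lemma sum_step_prod_decay_le_ln_ceiling:
  fixes \<beta> \<gamma> C C' :: real and T :: nat and \<eta> :: "nat \<Rightarrow> real"
  assumes "0 < \<beta>" and "0 < \<gamma>" and "\<forall>t\<ge>1. \<eta> t > 0"
    and "C \<ge> 2 / \<gamma>" and "C' < 2 / (\<gamma> + \<beta>)"
    and late: "\<forall>t. t \<ge> 1 + nat \<lceil>\<beta> / \<gamma>\<rceil> \<longrightarrow> \<eta> t = C / real t \<and> C / real t \<le> 2 / (\<beta> + \<gamma>)"
    and early: "\<forall>t. 1 \<le> t \<and> t \<le> nat \<lceil>\<beta> / \<gamma>\<rceil> \<longrightarrow> \<eta> t = C' / real t \<and> C' / real t \<le> 2 / (\<beta> + \<gamma>)"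
  shows "(\<Sum>t=1..T. \<eta> t * (\<Prod>j=t+1..T. 1 - \<eta> j * \<gamma> / 2)) \<le> C * ln (exp 2 * real_of_int \<lceil>\<beta> / \<gamma>\<rceil>)"
proof -
  define k where "k = nat \<lceil>\<beta> / \<gamma>\<rceil>"
  have "0 < \<lceil>\<beta> / \<gamma>\<rceil>"
    using assms(1,2) by simp
  then have "1 \<le> k"
    unfolding k_def by linarith
  have k: "real_of_int \<lceil>\<beta> / \<gamma>\<rceil> = real k"
    using \<open>0 < \<lceil>\<beta> / \<gamma>\<rceil>\<close> by (simp add: k_def)
  have "2 / (\<gamma> + \<beta>) \<le> 2 / \<gamma>"
    using assms(1,2) by (intro divide_left_mono) auto
  then have "C' \<le> C"
    using assms(4,5) by linarith
  have "\<eta> j * \<gamma> \<le> 2" if "1 \<le> j" for j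
  proof -
    have "\<eta> j \<le> 2 / (\<beta> + \<gamma>)"
      using late early that by (cases "j \<le> k") (auto simp: k_def)
    then have "\<eta> j * \<gamma> \<le> 2 / (\<beta> + \<gamma>) * \<gamma>"
      using assms(2) by (intro mult_right_mono) auto
    also have "\<dots> \<le> 2"
      using assms(1,2) by (simp add: field_simps)
    finally show ?thesis .
  qed
  then have "(\<Sum>t=1..T. \<eta> t * (\<Prod>j=t+1..T. 1 - \<eta> j * \<gamma> / 2)) \<le> C * (2 + ln (real k))"
    using assms(2,3,4) \<open>1 \<le> k\<close> late early \<open>C' \<le> C\<close>
    by (intro sum_step_prod_decay_le)
      (auto simp: k_def field_simps less_imp_le intro: divide_right_mono)
  also have "2 + ln (real k) = ln (exp 2 * real_of_int \<lceil>\<beta> / \<gamma>\<rceil>)"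
    using \<open>1 \<le> k\<close> k by (simp add: ln_mult)
  finally show ?thesis .
qed

theorem lemma16:
  fixes \<beta> \<gamma> :: real and T :: nat and \<eta> :: "nat \<Rightarrow> real"
  assumes "\<beta> > 0" and "\<gamma> > 0" and "T \<ge> 1"
    and "\<forall>t\<ge>1. \<eta> t > 0"
  shows
   "(\<forall>C::real. (\<forall>t\<ge>1. \<eta> t = C) \<and> C \<le> 2 / (\<beta> + \<gamma>) \<longrightarrow>
       (\<Sum>t=1..T. \<eta> t * (\<Prod>j=t+1..T. 1 - \<eta> j * \<gamma>)) = (1 - (1 - C * \<gamma>) ^ T) / \<gamma>)
  \<and> (\<forall>C C'::real.
       C \<ge> 2 / \<gamma> \<and> C' < 2 / (\<gamma> + \<beta>) \<and>
       (\<forall>t. t \<ge> 1 + nat \<lceil>\<beta> / \<gamma>\<rceil> \<longrightarrow> \<eta> t = C / real t \<and> C / real t \<le> 2 / (\<beta> + \<gamma>)) \<and>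
       (\<forall>t. 1 \<le> t \<and> t \<le> nat \<lceil>\<beta> / \<gamma>\<rceil> \<longrightarrow> \<eta> t = C' / real t \<and> C' / real t \<le> 2 / (\<beta> + \<gamma>))
     \<longrightarrow> (\<Sum>t=1..T. \<eta> t * (\<Prod>j=t+1..T. 1 - \<eta> j * \<gamma> / 2))
           \<le> C * ln (exp 2 * real_of_int \<lceil>\<beta> / \<gamma>\<rceil>))
  \<and> (\<forall>C::real.
       (\<forall>t\<ge>1. \<eta> t \<le> C / real t \<and> C / real t < 2 / \<beta>)
     \<longrightarrow> (\<Sum>t=1..T. \<eta> t * (\<Prod>j=t+1..T. (1 + \<beta> * \<eta> j)^2))
           \<le> C * exp (2 * C * \<beta>) * real T powr (2 * C * \<beta>)
              * min (1 + 1 / (2 * C * \<beta>)) (ln (exp 1 * real T)))"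
proof (intro conjI allI impI)
  fix C :: real
  assume "(\<forall>t\<ge>1. \<eta> t = C) \<and> C \<le> 2 / (\<beta> + \<gamma>)"
  then have const: "\<And>t. 1 \<le> t \<Longrightarrow> \<eta> t = C"
    by simp
  then have "0 < C"
    using assms(4) by force
  have "(\<Sum>t=1..T. \<eta> t * (\<Prod>j=t+1..T. 1 - \<eta> j * \<gamma>)) = (\<Sum>t=1..T. C * (\<Prod>j=t+1..T. 1 - C * \<gamma>))"
    using const by (intro sum.cong prod.cong arg_cong2[where f = "(*)"]) auto
  also have "\<dots> = (1 - (1 - C * \<gamma>) ^ T) / \<gamma>"
    using \<open>0 < C\<close> assms(2) by (intro sum_step_prod_const_eq) simp
  finally show "(\<Sum>t=1..T. \<eta> t * (\<Prod>j=t+1..T. 1 - \<eta> j * \<gamma>)) = (1 - (1 - C * \<gamma>) ^ T) / \<gamma>" .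
next
  fix C C' :: real
  assume "C \<ge> 2 / \<gamma> \<and> C' < 2 / (\<gamma> + \<beta>) \<and>
       (\<forall>t. t \<ge> 1 + nat \<lceil>\<beta> / \<gamma>\<rceil> \<longrightarrow> \<eta> t = C / real t \<and> C / real t \<le> 2 / (\<beta> + \<gamma>)) \<and>
       (\<forall>t. 1 \<le> t \<and> t \<le> nat \<lceil>\<beta> / \<gamma>\<rceil> \<longrightarrow> \<eta> t = C' / real t \<and> C' / real t \<le> 2 / (\<beta> + \<gamma>))"
  then show "(\<Sum>t=1..T. \<eta> t * (\<Prod>j=t+1..T. 1 - \<eta> j * \<gamma> / 2)) \<le> C * ln (exp 2 * real_of_int \<lceil>\<beta> / \<gamma>\<rceil>)"
    using sum_step_prod_decay_le_ln_ceiling[OF assms(1,2,4)] by blast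
next
  fix C :: real
  assume "\<forall>t\<ge>1. \<eta> t \<le> C / real t \<and> C / real t < 2 / \<beta>"
  then show "(\<Sum>t=1..T. \<eta> t * (\<Prod>j=t+1..T. (1 + \<beta> * \<eta> j)^2))
           \<le> C * exp (2 * C * \<beta>) * real T powr (2 * C * \<beta>)
              * min (1 + 1 / (2 * C * \<beta>)) (ln (exp 1 * real T))"
    using assms(4) by (intro sum_step_prod_growth_le[OF assms(1,3)]) auto
qed

end
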